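(* Let $1\le\ell_1\le\dots\le\ell_r\le n$, $K\in B(\varpi_{\ell_r})\otimes\cdots\otimes B(\varpi_{\ell_1})$, $\ell\in[n]$ with $\ell\ge\ell_r$, and $j\in[n-1]$. Then $$tT_j^{-1}\sum_{C\in B(\varpi_\ell)}X^C\Psi_{C\otimes K}=\sum_{D\in B(\varpi_\ell)}X^Df_{D,K},\qquad T_j\sum_{C\in B(\varpi_\ell)}X^C\Psi_{C\otimes K}=\sum_{D\in B(\varpi_\ell)}X^Dg_{D,K},$$ where $$f_{D,K}=\begin{cases}tT_j^{-1}\Psi_{s_jD\otimes K},& s_jD\le D,\\ T_j\Psi_{s_jD\otimes K}+(1-t)\Psi_{D\otimes K},& s_jD\ge D,\end{cases}\qquad g_{D,K}=\begin{cases}tT_j^{-1}\Psi_{s_jD\otimes K}-(1-t)\Psi_{D\otimes K},& s_jD\le D,\\ T_j\Psi_{s_jD\otimes K},& s_jD\ge D\end{cases}$$ (the two cases agree when $s_jD=D$).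
   Context: Fix $n\ge1$, $[n]=\{1,\dots,n\}$. $S_n$ with simple transpositions $s_i$ and length $\ell(\cdot)$ acts on $\mathbb Z^n$ by permuting coordinates; $\varpi_k=\varepsilon_1+\dots+\varepsilon_k$; $S_{n,\lambda}$ is the stabilizer of $\lambda$. The affine Hecke algebra $H$ is the $\mathbb Z[t^{\pm1}]$-algebra with generators $T_1,\dots,T_{n-1},X_1^{\pm1},\dots,X_n^{\pm1}$ and relations $T_i^2=(t-1)T_i+t$, $T_iT_{i+1}T_i=T_{i+1}T_iT_{i+1}$, $T_iT_j=T_jT_i$ ($|i-j|>1$), $X_iX_j=X_jX_i$, $T_iX_iT_i=tX_{i+1}$, $T_iX_j=X_jT_i$ ($j\notin\{i,i+1\}$); $tT_i^{-1}=T_i+1-t$. $T_w$ via reduced words; $H_n=\mathrm{span}\{T_w\}$, $H_{n,\lambda}=\mathrm{span}\{T_w:w\in S_{n,\lambda}\}$, $\mathbf 1_\lambda=\sum_{w\in S_{n,\lambda}}T_w$. Columns: $B(\varpi_\ell)$ is the set of $C=(c_1<\dots<c_\ell)\subseteq[n]$; order $E\le F$ iff $e_i\le f_i$ for all $i$; $s_jC$ is the column whose underlying set is the image of $C$ under $(j,j+1)$; $X^C=\prod_{c\in C}X_c$; $u_C\in S_n$ sends $k\mapsto c_k$ ($k\le\ell$) and $\ell+1,\dots,n$ increasingly onto $[n]\setminus C$. $B(\varpi_{\ell_r})\otimes\cdots\otimes B(\varpi_{\ell_1})$ is the set of sequences $C_r\otimes\cdots\otimes C_1$, $C_i\in B(\varpi_{\ell_i})$;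 $C\otimes K$ prepends a column. $\Psi$: each $h\in H_n$ is uniquely $\sum_{F\in B(\varpi_\ell)}T_{u_F}h_F$, $h_F\in H_{n,\varpi_\ell}$. $\Psi_C=t^{\ell(u_C)}(T_{u_C^{-1}})^{-1}\mathbf 1_{\varpi_\ell}$ for $C\in B(\varpi_\ell)$; for $T=C\otimes S$ ($C\in B(\varpi_\ell)$, $S$ with columns of length $\le\ell$), write $\Psi_S=\sum_ET_{u_E}h_{E,S}$ ($h_{E,S}\in H_{n,\varpi_\ell}$) and set $\Psi_T=t^{\ell(u_C)}(T_{u_C^{-1}})^{-1}h_{C,S}$. *)

theory Defs
  imports "HOL-Combinatorics.Combinatorics"
begin

text \<open>The data of H: the element t, the generators T_i and X_i.  The coefficient
ring Z[t,t^-1] is realised as the subring generated by the central unit t.\<close>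
record 'h ahecke =
  tH :: 'h
  TH :: "nat \<Rightarrow> 'h"
  XH :: "nat \<Rightarrow> 'h"

definition hinv :: "'h::ring_1 \<Rightarrow> 'h" where
  "hinv a = (THE b. a * b = 1 \<and> b * a = 1)"

definition zpow :: "'h::ring_1 \<Rightarrow> int \<Rightarrow> 'h" where
  "zpow a k = (if 0 \<le> k then a ^ nat k else hinv a ^ nat (- k))"

definition sref :: "nat \<Rightarrow> nat \<Rightarrow> nat" where
  "sref i = transpose i (Suc i)"

definition wordperm :: "nat list \<Rightarrow> nat \<Rightarrow> nat" where
  "wordperm ws = foldr (\<lambda>i p. sref i \<circ> p) ws id"

definition is_word :: "nat \<Rightarrow> nat list \<Rightarrow> bool" where
  "is_word n ws \<longleftrightarrow> set ws \<subseteq> {1..<n}"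

definition Sn :: "nat \<Rightarrow> (nat \<Rightarrow> nat) set" where
  "Sn n = {w. w permutes {1..n}}"

definition perm_len :: "nat \<Rightarrow> (nat \<Rightarrow> nat) \<Rightarrow> nat" where
  "perm_len n w = (LEAST k. \<exists>ws. is_word n ws \<and> length ws = k \<and> wordperm ws = w)"

definition red_word :: "nat \<Rightarrow> (nat \<Rightarrow> nat) \<Rightarrow> nat list" where
  "red_word n w = (SOME ws. is_word n ws \<and> wordperm ws = w \<and> length ws = perm_len n w)"

definition Tw :: "'h::ring_1 ahecke \<Rightarrow> nat \<Rightarrow> (nat \<Rightarrow> nat) \<Rightarrow> 'h" where
  "Tw H n w = prod_list (map (TH H) (red_word n w))"

definition stab :: "nat \<Rightarrow> (nat \<Rightarrow> int) \<Rightarrow> (nat \<Rightarrow> nat) set" where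
  "stab n lam = {w \<in> Sn n. \<forall>i\<in>{1..n}. lam (w i) = lam i}"

definition varpi :: "nat \<Rightarrow> nat \<Rightarrow> int" where
  "varpi l = (\<lambda>i. if 1 \<le> i \<and> i \<le> l then 1 else 0)"

definition Xpow :: "'h::ring_1 ahecke \<Rightarrow> nat \<Rightarrow> (nat \<Rightarrow> int) \<Rightarrow> 'h" where
  "Xpow H n lam = prod_list (map (\<lambda>i. zpow (XH H i) (lam i)) [1..<Suc n])"

definition basis_idx :: "nat \<Rightarrow> (int \<times> (nat \<Rightarrow> int) \<times> (nat \<Rightarrow> nat)) set" where
  "basis_idx n = {(k, lam, w). (\<forall>i. i \<notin> {1..n} \<longrightarrow> lam i = 0) \<and> w \<in> Sn n}"

definition basis_elt :: "'h::ring_1 ahecke \<Rightarrow> nat \<Rightarrow> int \<times> (nat \<Rightarrow> int) \<times> (nat \<Rightarrow> nat) \<Rightarrow> 'h" where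
  "basis_elt H n = (\<lambda>(k, lam, w). zpow (tH H) k * Xpow H n lam * Tw H n w)"

definition is_affine_hecke :: "nat \<Rightarrow> 'h::ring_1 ahecke \<Rightarrow> bool" where
  "is_affine_hecke n H \<longleftrightarrow>
     (\<exists>s. tH H * s = 1 \<and> s * tH H = 1) \<and>
     (\<forall>h. tH H * h = h * tH H) \<and>
     (\<forall>i\<in>{1..n}. \<exists>s. XH H i * s = 1 \<and> s * XH H i = 1) \<and>
     (\<forall>i\<in>{1..n}. \<forall>j\<in>{1..n}. XH H i * XH H j = XH H j * XH H i) \<and>
     (\<forall>i\<in>{1..<n}. TH H i * TH H i = (tH H - 1) * TH H i + tH H) \<and>
     (\<forall>i. 1 \<le> i \<and> i + 1 < n \<longrightarrow>
        TH H i * TH H (i+1) * TH H i = TH H (i+1) * TH H i * TH H (i+1)) \<and>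
     (\<forall>i\<in>{1..<n}. \<forall>j\<in>{1..<n}. (i + 1 < j \<or> j + 1 < i) \<longrightarrow> TH H i * TH H j = TH H j * TH H i) \<and>
     (\<forall>i\<in>{1..<n}. TH H i * XH H i * TH H i = tH H * XH H (i+1)) \<and>
     (\<forall>i\<in>{1..<n}. \<forall>j\<in>{1..n}. j \<noteq> i \<and> j \<noteq> i + 1 \<longrightarrow> TH H i * XH H j = XH H j * TH H i) \<and>
     (\<forall>h. \<exists>!c :: int \<times> (nat \<Rightarrow> int) \<times> (nat \<Rightarrow> nat) \<Rightarrow> int.
          (\<forall>b. c b \<noteq> 0 \<longrightarrow> b \<in> basis_idx n) \<and> finite {b. c b \<noteq> 0} \<and>
          h = (\<Sum>b\<in>{b. c b \<noteq> 0}. of_int (c b) * basis_elt H n b))"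

definition laurent :: "'h::ring_1 ahecke \<Rightarrow> 'h set" where
  "laurent H = {\<Sum>k\<in>F. of_int (a k) * zpow (tH H) k | F a. finite F}"

definition hspan :: "'h::ring_1 ahecke \<Rightarrow> nat \<Rightarrow> (nat \<Rightarrow> nat) set \<Rightarrow> 'h set" where
  "hspan H n A = {\<Sum>w\<in>A. c w * Tw H n w | c. \<forall>w. c w \<in> laurent H}"

definition Hfin :: "'h::ring_1 ahecke \<Rightarrow> nat \<Rightarrow> 'h set" where
  "Hfin H n = hspan H n (Sn n)"

definition Hpar :: "'h::ring_1 ahecke \<Rightarrow> nat \<Rightarrow> (nat \<Rightarrow> int) \<Rightarrow> 'h set" where
  "Hpar H n lam = hspan H n (stab n lam)"

definition one_par :: "'h::ring_1 ahecke \<Rightarrow> nat \<Rightarrow> (nat \<Rightarrow> int) \<Rightarrow> 'h" where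
  "one_par H n lam = (\<Sum>w\<in>stab n lam. Tw H n w)"

definition cols :: "nat \<Rightarrow> nat \<Rightarrow> nat set set" where
  "cols n l = {C. C \<subseteq> {1..n} \<and> card C = l}"

definition col_le :: "nat set \<Rightarrow> nat set \<Rightarrow> bool" where
  "col_le E F \<longleftrightarrow> card E = card F \<and>
     (\<forall>i < card E. sorted_list_of_set E ! i \<le> sorted_list_of_set F ! i)"

definition scol :: "nat \<Rightarrow> nat set \<Rightarrow> nat set" where
  "scol j C = sref j ` C"

definition Xcol :: "'h::ring_1 ahecke \<Rightarrow> nat set \<Rightarrow> 'h" where
  "Xcol H C = prod_list (map (XH H) (sorted_list_of_set C))"

definition ucol :: "nat \<Rightarrow> nat set \<Rightarrow> nat \<Rightarrow> nat" where
  "ucol n C k = (if 1 \<le> k \<and> k \<le> card C then sorted_list_of_set C ! (k - 1)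
                 else if card C < k \<and> k \<le> n then sorted_list_of_set ({1..n} - C) ! (k - card C - 1)
                 else k)"

definition decomp :: "'h::ring_1 ahecke \<Rightarrow> nat \<Rightarrow> nat \<Rightarrow> 'h \<Rightarrow> nat set \<Rightarrow> 'h" where
  "decomp H n l h = (THE hf. (\<forall>F. hf F \<in> (if F \<in> cols n l then Hpar H n (varpi l) else {0})) \<and>
                            h = (\<Sum>F\<in>cols n l. Tw H n (ucol n F) * hf F))"

text \<open>A tableau C_r (x) ... (x) C_1 is the list [C_r, ..., C_1]; C (x) K is C # K.
  The value on [] is a junk value and never used.\<close>
fun Psi :: "'h::ring_1 ahecke \<Rightarrow> nat \<Rightarrow> nat set list \<Rightarrow> 'h" where
  "Psi H n [] = 1"
| "Psi H n [C] = tH H ^ perm_len n (ucol n C) * hinv (Tw H n (inv (ucol n C)))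
                  * one_par H n (varpi (card C))"
| "Psi H n (C # D # S) = tH H ^ perm_len n (ucol n C) * hinv (Tw H n (inv (ucol n C)))
                  * decomp H n (card C) (Psi H n (D # S)) C"

definition fDK :: "'h::ring_1 ahecke \<Rightarrow> nat \<Rightarrow> nat \<Rightarrow> nat set \<Rightarrow> nat set list \<Rightarrow> 'h" where
  "fDK H n j D K = (if col_le (scol j D) D
      then tH H * hinv (TH H j) * Psi H n (scol j D # K)
      else TH H j * Psi H n (scol j D # K) + (1 - tH H) * Psi H n (D # K))"

definition gDK :: "'h::ring_1 ahecke \<Rightarrow> nat \<Rightarrow> nat \<Rightarrow> nat set \<Rightarrow> nat set list \<Rightarrow> 'h" where
  "gDK H n j D K = (if col_le (scol j D) D
      then tH H * hinv (TH H j) * Psi H n (scol j D # K) - (1 - tH H) * Psi H n (D # K)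
      else TH H j * Psi H n (scol j D # K))"

definition is_tableau :: "nat \<Rightarrow> nat set list \<Rightarrow> bool" where
  "is_tableau n K \<longleftrightarrow> K \<noteq> [] \<and> (\<forall>C\<in>set K. C \<subseteq> {1..n} \<and> 1 \<le> card C) \<and>
     sorted_wrt (\<lambda>A B. card B \<le> card A) K"

end

theory Submission
  imports Defs
begin

text \<open>Nothing about the elements \<open>\<Psi>\<close> is needed: both identities hold for an arbitrary family
  \<open>P\<close> of coefficients indexed by columns.  They come from moving \<open>T\<^sub>j\<close> past a single monomial
  \<open>X\<^sup>C\<close>.  If \<open>C\<close> contains both or neither of \<open>j, j+1\<close>, then \<open>T\<^sub>j\<close> commutes with \<open>X\<^sup>C\<close>; otherwise
  the Bernstein relations \<open>T\<^sub>j X\<^sub>j = X\<^sub>j\<^sub>+\<^sub>1 t T\<^sub>j\<^sup>-\<^sup>1\<close> and \<open>T\<^sub>j X\<^sub>j\<^sub>+\<^sub>1 = X\<^sub>j T\<^sub>j - (1-t) X\<^sub>j\<^sub>+\<^sub>1\<close> turn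
  \<open>X\<^sup>C\<close> into \<open>X\<^bsup>s\<^sub>jC\<^esup>\<close>.  Reindexing the sum by the involution \<open>s\<^sub>j\<close> and noting that
  \<open>s\<^sub>jD \<le> D\<close> fails exactly when \<open>j \<in> D\<close> and \<open>j+1 \<notin> D\<close> gives the formula for \<open>T\<^sub>j\<close>;
  the one for \<open>tT\<^sub>j\<^sup>-\<^sup>1 = T\<^sub>j + 1 - t\<close> follows.\<close>

lemma hinv_eqI:
  fixes a b :: "'h::ring_1"
  assumes "a * b = 1" "b * a = 1"
  shows "hinv a = b"
  unfolding hinv_def
proof (rule the_equality)
  fix b' assume b': "a * b' = 1 \<and> b' * a = 1"
  have "b' = b' * (a * b)" by (simp add: assms)
  also have "\<dots> = b" using b' by (simp flip: mult.assoc)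
  finally show "b' = b" .
qed (use assms in auto)

lemma prod_list_map_insort:
  fixes X :: "'a::linorder \<Rightarrow> 'h::monoid_mult"
  assumes "\<forall>y\<in>set xs. X a * X y = X y * X a"
  shows "prod_list (map X (insort a xs)) = X a * prod_list (map X xs)"
  using assms by (induction xs) (auto simp: mult.assoc[symmetric])

lemma commute_prod_list:
  fixes X :: "'a \<Rightarrow> 'h::monoid_mult"
  assumes "\<forall>y\<in>set xs. T * X y = X y * T"
  shows "T * prod_list (map X xs) = prod_list (map X xs) * T"
  using assms
proof (induction xs)
  case (Cons y ys)
  have "T * X y = X y * T" using Cons.prems by simp
  then have "T * (X y * prod_list (map X ys)) = X y * (T * prod_list (map X ys))"
    by (simp flip: mult.assoc)
  also have "\<dots> = X y * (prod_list (map X ys) * T)"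
    using Cons by simp
  finally show ?case by (simp add: mult.assoc)
qed simp

locale hecke_rank_one =
  fixes t T Xj Xk :: "'h::ring_1"
  assumes t_unit: "\<exists>s. t * s = 1 \<and> s * t = 1"
    and t_central: "\<And>h. t * h = h * t"
    and quadratic: "T * T = (t - 1) * T + t"
    and bernstein: "T * Xj * T = t * Xk"
begin

lemma mult_t_cancel: "t * a = t * b \<Longrightarrow> a = b"
proof -
  obtain s where "s * t = 1" using t_unit by blast
  moreover assume "t * a = t * b"
  then have "s * t * a = s * t * b" by (simp add: mult.assoc)
  ultimately show "a = b" by simp
qed

lemma T_mult_T_shift: "T * (T + 1 - t) = t" "(T + 1 - t) * T = t"
proof -
  have "t * T = T * t" by (rule t_central)
  then show "T * (T + 1 - t) = t" "(T + 1 - t) * T = t"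
    using quadratic by (simp_all add: algebra_simps)
qed

lemma t_inverse_central: "t * s = 1 \<Longrightarrow> s * t = 1 \<Longrightarrow> s * h = h * s"
proof -
  assume s: "t * s = 1" "s * t = 1"
  have "s * h = s * (h * (t * s))" by (simp add: s)
  also have "\<dots> = s * (t * h) * s" by (simp add: t_central mult.assoc)
  also have "\<dots> = h * s" by (simp add: s flip: mult.assoc)
  finally show ?thesis .
qed

lemma t_hinv_T: "t * hinv T = T + 1 - t"
proof -
  obtain s where s: "t * s = 1" "s * t = 1" using t_unit by blast
  have "hinv T = s * (T + 1 - t)"
  proof (rule hinv_eqI)
    have "T * (s * (T + 1 - t)) = s * (T * (T + 1 - t))"
      by (simp add: t_inverse_central[OF s, of T] flip: mult.assoc)
    then show "T * (s * (T + 1 - t)) = 1"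
      by (simp add: T_mult_T_shift s)
    show "s * (T + 1 - t) * T = 1"
      by (simp add: T_mult_T_shift s mult.assoc)
  qed
  then show ?thesis by (simp add: s flip: mult.assoc)
qed

lemma T_mult_Xj: "T * Xj = Xk * (t * hinv T)"
proof (rule mult_t_cancel)
  have "t * (T * Xj) = T * Xj * (T * (T + 1 - t))"
    by (simp add: T_mult_T_shift t_central)
  also have "\<dots> = t * (Xk * (T + 1 - t))"
    by (simp add: bernstein flip: mult.assoc)
  finally show "t * (T * Xj) = t * (Xk * (t * hinv T))"
    by (simp add: t_hinv_T)
qed

lemma T_shift_mult_Xk: "(T + 1 - t) * Xk = Xj * T"
proof (rule mult_t_cancel)
  have "t * ((T + 1 - t) * Xk) = (T + 1 - t) * (t * Xk)"
    by (simp add: t_central[of "T + 1 - t"] flip: mult.assoc)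
  also have "\<dots> = t * (Xj * T)"
    by (simp add: T_mult_T_shift flip: bernstein mult.assoc)
  finally show "t * ((T + 1 - t) * Xk) = t * (Xj * T)" .
qed

lemma T_mult_Xk: "T * Xk = Xj * T - (1 - t) * Xk"
  using T_shift_mult_Xk by (simp add: algebra_simps)

lemma T_mult_Xj_Xk: "T * (Xj * Xk) = Xk * Xj * T"
proof -
  have "T * (Xj * Xk) = Xk * ((T + 1 - t) * Xk)"
    by (simp add: T_mult_Xj t_hinv_T flip: mult.assoc)
  then show ?thesis
    by (simp add: T_shift_mult_Xk mult.assoc)
qed
end

lemma sref_sref [simp]: "sref j (sref j x) = x"
  by (simp add: sref_def)

lemma mem_scol_iff: "x \<in> scol j C \<longleftrightarrow> sref j x \<in> C"
proof
  assume "x \<in> scol j C"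
  then obtain y where "y \<in> C" "x = sref j y" by (auto simp: scol_def)
  then show "sref j x \<in> C" by simp
next
  assume "sref j x \<in> C"
  then have "sref j (sref j x) \<in> scol j C" unfolding scol_def by (rule imageI)
  then show "x \<in> scol j C" by simp
qed

lemma scol_scol [simp]: "scol j (scol j C) = C"
  by (auto simp: mem_scol_iff)

lemma card_scol [simp]: "card (scol j C) = card C"
  by (simp add: scol_def sref_def card_image)

lemma scol_up: "j \<in> C \<Longrightarrow> Suc j \<notin> C \<Longrightarrow> scol j C = insert (Suc j) (C - {j})"
  by (auto simp: mem_scol_iff sref_def transpose_def split: if_splits)

lemma scol_down: "Suc j \<in> C \<Longrightarrow> j \<notin> C \<Longrightarrow> scol j C = insert j (C - {Suc j})"
  by (auto simp: mem_scol_iff sref_def transpose_def split: if_splits)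

lemma scol_fixed: "(j \<in> C \<longleftrightarrow> Suc j \<in> C) \<Longrightarrow> scol j C = C"
  by (auto simp: mem_scol_iff sref_def transpose_def split: if_splits)

lemma scol_in_cols:
  assumes "C \<in> cols n l" "j \<in> {1..<n}"
  shows "scol j C \<in> cols n l"
proof -
  have "scol j C \<subseteq> {1..n}"
    using assms unfolding cols_def
    by (auto simp: mem_scol_iff sref_def transpose_def split: if_splits)
  then show ?thesis using assms(1) by (simp add: cols_def)
qed

lemma col_le_refl: "col_le C C"
  by (simp add: col_le_def)

lemma col_le_scol_down:
  assumes "finite D" "Suc j \<in> D" "j \<notin> D"
  shows "col_le (scol j D) D"
proof -
  let ?xs = "sorted_list_of_set D"
  have mono: "strict_mono_on D (sref j)"
    using assms by (auto simp: strict_mono_on_def sref_def transpose_def)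
  have "sorted_wrt (<) (map (sref j) ?xs)"
    unfolding sorted_wrt_map
    by (rule sorted_wrt_mono_rel[OF _ strict_sorted_list_of_set])
       (use mono assms in \<open>auto simp: strict_mono_on_def\<close>)
  moreover have "length (map (sref j) ?xs) = card (scol j D)"
    using assms by simp
  ultimately have sorted_scol: "sorted_list_of_set (scol j D) = map (sref j) ?xs"
    using assms by (subst sorted_list_of_set_unique[symmetric]) (auto simp: scol_def)
  have "sref j x \<le> x" if "x \<in> D" for x
    using that assms by (auto simp: sref_def transpose_def)
  moreover have "?xs ! i \<in> D" if "i < card D" for i
    using that assms nth_mem[of i ?xs] by simp
  ultimately show ?thesis
    by (simp add: col_le_def sorted_scol)
qed

text \<open>For \<open>j \<in> D\<close>, \<open>j+1 \<notin> D\<close> the reverse comparison holds, and \<open>col_le\<close> is antisymmetric.\<close>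

lemma not_col_le_scol_up:
  assumes "finite D" "j \<in> D" "Suc j \<notin> D"
  shows "\<not> col_le (scol j D) D"
proof
  assume le: "col_le (scol j D) D"
  have fin: "finite (scol j D)"
    using assms(1) by (simp add: scol_def)
  then have "col_le (scol j (scol j D)) (scol j D)"
    using assms by (intro col_le_scol_down) (simp_all add: mem_scol_iff sref_def)
  then have ge: "col_le D (scol j D)" by simp
  have "sorted_list_of_set (scol j D) = sorted_list_of_set D"
  proof (rule nth_equalityI)
    show "length (sorted_list_of_set (scol j D)) = length (sorted_list_of_set D)"
      by simp
    fix i assume "i < length (sorted_list_of_set (scol j D))"
    then have i: "i < card D" by simp
    have "sorted_list_of_set (scol j D) ! i \<le> sorted_list_of_set D ! i"
      using le i unfolding col_le_def by simp
    moreover have "sorted_list_of_set D ! i \<le> sorted_list_of_set (scol j D) ! i"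
      using ge i unfolding col_le_def by simp
    ultimately show "sorted_list_of_set (scol j D) ! i = sorted_list_of_set D ! i"
      by (rule antisym)
  qed
  then have "scol j D = D"
    using fin assms(1) by (metis set_sorted_list_of_set)
  moreover have "Suc j \<in> scol j D"
    using assms(2) by (simp add: mem_scol_iff sref_def)
  ultimately show False using assms(3) by simp
qed

lemma col_le_scol_iff:
  assumes "finite D"
  shows "col_le (scol j D) D \<longleftrightarrow> (j \<in> D \<longrightarrow> Suc j \<in> D)"
proof (cases "j \<in> D \<longleftrightarrow> Suc j \<in> D")
  case True
  then show ?thesis by (simp add: scol_fixed col_le_refl)
next
  case False
  then show ?thesis using assms col_le_scol_down not_col_le_scol_up by blast
qed

locale affine_hecke =
  fixes n :: nat and H :: "'h::ring_1 ahecke"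
  assumes affine_hecke: "is_affine_hecke n H"
begin

lemma t_unit: "\<exists>s. tH H * s = 1 \<and> s * tH H = 1"
  using affine_hecke unfolding is_affine_hecke_def by (elim conjE) assumption

lemma t_central: "tH H * h = h * tH H"
proof -
  have "\<forall>h. tH H * h = h * tH H"
    using affine_hecke unfolding is_affine_hecke_def by (elim conjE) assumption
  then show ?thesis ..
qed

lemma X_commute:
  assumes "i \<in> {1..n}" "k \<in> {1..n}"
  shows "XH H i * XH H k = XH H k * XH H i"
proof -
  have "\<forall>i\<in>{1..n}. \<forall>k\<in>{1..n}. XH H i * XH H k = XH H k * XH H i"
    using affine_hecke unfolding is_affine_hecke_def by (elim conjE) assumption
  then show ?thesis using assms by blast
qed

lemma T_X_commute:
  assumes "j \<in> {1..<n}" "i \<in> {1..n}" "i \<noteq> j" "i \<noteq> Suc j"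
  shows "TH H j * XH H i = XH H i * TH H j"
proof -
  have "\<forall>j\<in>{1..<n}. \<forall>i\<in>{1..n}. i \<noteq> j \<and> i \<noteq> j + 1 \<longrightarrow> TH H j * XH H i = XH H i * TH H j"
    using affine_hecke unfolding is_affine_hecke_def by (elim conjE) assumption
  then show ?thesis using assms by simp
qed

lemma T_quadratic:
  assumes "j \<in> {1..<n}"
  shows "TH H j * TH H j = (tH H - 1) * TH H j + tH H"
proof -
  have "\<forall>j\<in>{1..<n}. TH H j * TH H j = (tH H - 1) * TH H j + tH H"
    using affine_hecke unfolding is_affine_hecke_def by (elim conjE) assumption
  then show ?thesis using assms by blast
qed

lemma T_X_T:
  assumes "j \<in> {1..<n}"
  shows "TH H j * XH H j * TH H j = tH H * XH H (Suc j)"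
proof -
  have "\<forall>j\<in>{1..<n}. TH H j * XH H j * TH H j = tH H * XH H (j + 1)"
    using affine_hecke unfolding is_affine_hecke_def by (elim conjE) assumption
  then show ?thesis using assms by simp
qed

lemma hecke_rank_one:
  assumes "j \<in> {1..<n}"
  shows "hecke_rank_one (tH H) (TH H j) (XH H j) (XH H (Suc j))"
  unfolding hecke_rank_one_def
  using t_unit t_central T_quadratic[OF assms] T_X_T[OF assms] by blast

lemma Xcol_insert:
  assumes "insert a E \<subseteq> {1..n}" "a \<notin> E"
  shows "Xcol H (insert a E) = XH H a * Xcol H E"
proof -
  have fin: "finite E"
    using finite_subset[OF assms(1) finite_atLeastAtMost] by simp
  have "\<forall>y\<in>set (sorted_list_of_set E). XH H a * XH H y = XH H y * XH H a"
    using assms fin by (auto intro!: X_commute)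
  moreover have "sorted_list_of_set (insert a E) = insort a (sorted_list_of_set E)"
    using fin assms(2) by (simp add: sorted_list_of_set_insert_remove)
  ultimately show ?thesis
    unfolding Xcol_def by (simp only: prod_list_map_insort)
qed

lemma T_Xcol_commute_avoiding:
  assumes "j \<in> {1..<n}" "E \<subseteq> {1..n}" "j \<notin> E" "Suc j \<notin> E"
  shows "TH H j * Xcol H E = Xcol H E * TH H j"
  unfolding Xcol_def
proof (rule commute_prod_list, rule ballI)
  fix y assume "y \<in> set (sorted_list_of_set E)"
  then have "y \<in> E" using assms(2) finite_subset by fastforce
  then show "TH H j * XH H y = XH H y * TH H j"
    using assms by (intro T_X_commute) auto
qed

lemma T_Xcol_up:
  assumes "j \<in> {1..<n}" "C \<subseteq> {1..n}" "j \<in> C" "Suc j \<notin> C"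
  shows "TH H j * Xcol H C = Xcol H (scol j C) * (tH H * hinv (TH H j))"
proof -
  interpret hecke_rank_one "tH H" "TH H j" "XH H j" "XH H (Suc j)"
    using assms(1) by (rule hecke_rank_one)
  define E where "E = C - {j}"
  have C: "C = insert j E" "j \<notin> E" "Suc j \<notin> E" "E \<subseteq> {1..n}"
    using assms by (auto simp: E_def)
  have "TH H j * Xcol H E = Xcol H E * TH H j"
    using assms C by (intro T_Xcol_commute_avoiding) auto
  moreover have "tH H * Xcol H E = Xcol H E * tH H"
    by (rule t_central)
  ultimately have E_commute: "(TH H j + 1 - tH H) * Xcol H E = Xcol H E * (TH H j + 1 - tH H)"
    by (simp add: distrib_left distrib_right left_diff_distrib right_diff_distrib)
  have "Xcol H C = XH H j * Xcol H E"
    using assms(2) C(2) unfolding C(1) by (rule Xcol_insert)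
  then have "TH H j * Xcol H C = TH H j * XH H j * Xcol H E"
    by (simp add: mult.assoc)
  also have "\<dots> = XH H (Suc j) * ((TH H j + 1 - tH H) * Xcol H E)"
    by (simp only: T_mult_Xj t_hinv_T mult.assoc)
  also have "\<dots> = XH H (Suc j) * Xcol H E * (tH H * hinv (TH H j))"
    by (simp only: E_commute t_hinv_T mult.assoc)
  also have "XH H (Suc j) * Xcol H E = Xcol H (scol j C)"
    unfolding scol_up[OF assms(3,4), folded E_def]
    using assms(1) C(3,4) by (intro Xcol_insert[symmetric]) auto
  finally show ?thesis .
qed

lemma T_Xcol_down:
  assumes "j \<in> {1..<n}" "C \<subseteq> {1..n}" "Suc j \<in> C" "j \<notin> C"
  shows "TH H j * Xcol H C = Xcol H (scol j C) * TH H j - (1 - tH H) * Xcol H C"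
proof -
  interpret hecke_rank_one "tH H" "TH H j" "XH H j" "XH H (Suc j)"
    using assms(1) by (rule hecke_rank_one)
  define E where "E = C - {Suc j}"
  have C: "C = insert (Suc j) E" "j \<notin> E" "Suc j \<notin> E" "E \<subseteq> {1..n}"
    using assms by (auto simp: E_def)
  have XC: "Xcol H C = XH H (Suc j) * Xcol H E"
    using assms(2) C(3) unfolding C(1) by (rule Xcol_insert)
  have "TH H j * Xcol H C = (XH H j * TH H j - (1 - tH H) * XH H (Suc j)) * Xcol H E"
    by (simp add: XC T_mult_Xk flip: mult.assoc)
  also have "\<dots> = XH H j * (TH H j * Xcol H E) - (1 - tH H) * Xcol H C"
    by (simp add: XC left_diff_distrib mult.assoc)
  also have "TH H j * Xcol H E = Xcol H E * TH H j"
    using assms C by (intro T_Xcol_commute_avoiding) auto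
  also have "XH H j * (Xcol H E * TH H j) = Xcol H (scol j C) * TH H j"
    unfolding scol_down[OF assms(3,4), folded E_def]
    using assms(1) C(2,4) by (subst Xcol_insert) (auto simp: mult.assoc)
  finally show ?thesis .
qed

lemma T_Xcol_fixed:
  assumes "j \<in> {1..<n}" "C \<subseteq> {1..n}" "j \<in> C \<longleftrightarrow> Suc j \<in> C"
  shows "TH H j * Xcol H C = Xcol H C * TH H j"
proof (cases "j \<in> C")
  case True
  interpret hecke_rank_one "tH H" "TH H j" "XH H j" "XH H (Suc j)"
    using assms(1) by (rule hecke_rank_one)
  define E where "E = C - {j, Suc j}"
  have C: "C = insert j (insert (Suc j) E)" "j \<notin> E" "Suc j \<notin> E" "E \<subseteq> {1..n}"
    using assms True by (auto simp: E_def)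
  have "Xcol H C = XH H j * Xcol H (insert (Suc j) E)"
    using assms(2) C(2,3) unfolding C(1) by (intro Xcol_insert) auto
  also have "Xcol H (insert (Suc j) E) = XH H (Suc j) * Xcol H E"
    using assms(2) C(3) unfolding C(1) by (intro Xcol_insert) auto
  finally have XC: "Xcol H C = XH H j * XH H (Suc j) * Xcol H E"
    by (simp add: mult.assoc)
  have "TH H j * Xcol H C = TH H j * (XH H j * XH H (Suc j)) * Xcol H E"
    by (simp add: XC mult.assoc)
  also have "\<dots> = XH H (Suc j) * XH H j * (TH H j * Xcol H E)"
    by (simp only: T_mult_Xj_Xk mult.assoc)
  also have "XH H (Suc j) * XH H j = XH H j * XH H (Suc j)"
    using assms(1) by (intro X_commute) auto
  also have "TH H j * Xcol H E = Xcol H E * TH H j"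
    using assms C by (intro T_Xcol_commute_avoiding) auto
  finally show ?thesis by (simp add: XC mult.assoc)
qed (use assms T_Xcol_commute_avoiding in auto)

lemma T_mult_Xcol_mult:
  assumes "j \<in> {1..<n}" "C \<subseteq> {1..n}"
  shows "TH H j * (Xcol H C * p)
    = Xcol H (scol j C) * ((if j \<in> C \<and> Suc j \<notin> C then tH H * hinv (TH H j) else TH H j) * p)
      - Xcol H C * (if Suc j \<in> C \<and> j \<notin> C then (1 - tH H) * p else 0)"
proof -
  consider (up) "j \<in> C" "Suc j \<notin> C" | (down) "Suc j \<in> C" "j \<notin> C"
    | (fixed) "j \<in> C \<longleftrightarrow> Suc j \<in> C"
    by blast
  then show ?thesis
  proof cases
    case up
    then show ?thesis
      using T_Xcol_up[OF assms up] by (simp flip: mult.assoc)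
  next
    case down
    have "TH H j * (Xcol H C * p)
        = (Xcol H (scol j C) * TH H j - (1 - tH H) * Xcol H C) * p"
      using T_Xcol_down[OF assms down] by (simp flip: mult.assoc)
    also have "(1 - tH H) * Xcol H C = Xcol H C * (1 - tH H)"
      using t_central[of "Xcol H C"] by (simp add: left_diff_distrib right_diff_distrib)
    finally show ?thesis
      using down by (simp add: left_diff_distrib mult.assoc)
  next
    case fixed
    then show ?thesis
      using T_Xcol_fixed[OF assms fixed] scol_fixed[OF fixed] by (auto simp flip: mult.assoc)
  qed
qed

lemma T_mult_Xcol_sum:
  assumes j: "j \<in> {1..<n}"
  shows "TH H j * (\<Sum>C\<in>cols n l. Xcol H C * P C)
    = (\<Sum>D\<in>cols n l. Xcol H D *
        (if col_le (scol j D) D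
         then tH H * hinv (TH H j) * P (scol j D) - (1 - tH H) * P D
         else TH H j * P (scol j D)))"
proof -
  interpret hecke_rank_one "tH H" "TH H j" "XH H j" "XH H (Suc j)"
    using j by (rule hecke_rank_one)
  define a where
    "a C = (if j \<in> C \<and> Suc j \<notin> C then tH H * hinv (TH H j) else TH H j) * P C" for C
  define b where "b C = (if Suc j \<in> C \<and> j \<notin> C then (1 - tH H) * P C else 0)" for C
  have coefficient: "a (scol j D) - b D
      = (if col_le (scol j D) D then tH H * hinv (TH H j) * P (scol j D) - (1 - tH H) * P D
         else TH H j * P (scol j D))" if "D \<in> cols n l" for D
  proof -
    have fin: "finite D" using that finite_subset by (auto simp: cols_def)
    consider (up) "j \<in> D" "Suc j \<notin> D" | (down) "Suc j \<in> D" "j \<notin> D"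
      | (fixed) "j \<in> D \<longleftrightarrow> Suc j \<in> D"
      by blast
    then show ?thesis
    proof cases
      case up
      then show ?thesis
        by (simp add: a_def b_def col_le_scol_iff[OF fin] mem_scol_iff sref_def)
    next
      case down
      then show ?thesis
        by (simp add: a_def b_def col_le_scol_iff[OF fin] mem_scol_iff sref_def)
    next
      case fixed
      have "tH H * hinv (TH H j) * P D - (1 - tH H) * P D = TH H j * P D"
        by (simp add: t_hinv_T algebra_simps)
      then show ?thesis
        using fixed by (auto simp: a_def b_def scol_fixed col_le_refl)
    qed
  qed
  have "TH H j * (\<Sum>C\<in>cols n l. Xcol H C * P C)
      = (\<Sum>C\<in>cols n l. Xcol H (scol j C) * a C - Xcol H C * b C)"
    unfolding sum_distrib_left
    by (rule sum.cong) (simp_all add: T_mult_Xcol_mult[OF j] cols_def a_def b_def)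
  also have "\<dots> = (\<Sum>C\<in>cols n l. Xcol H (scol j C) * a C) - (\<Sum>D\<in>cols n l. Xcol H D * b D)"
    by (rule sum_subtractf)
  also have "(\<Sum>C\<in>cols n l. Xcol H (scol j C) * a C) = (\<Sum>D\<in>cols n l. Xcol H D * a (scol j D))"
    by (rule sum.reindex_bij_witness[of _ "scol j" "scol j"]) (auto intro: scol_in_cols j)
  also have "\<dots> - (\<Sum>D\<in>cols n l. Xcol H D * b D)
      = (\<Sum>D\<in>cols n l. Xcol H D * (a (scol j D) - b D))"
    by (simp add: right_diff_distrib sum_subtractf)
  finally show ?thesis
    by (simp add: coefficient cong: sum.cong)
qed

lemma t_hinv_T_mult_Xcol_sum:
  assumes j: "j \<in> {1..<n}"
  shows "tH H * hinv (TH H j) * (\<Sum>C\<in>cols n l. Xcol H C * P C)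
    = (\<Sum>D\<in>cols n l. Xcol H D *
        (if col_le (scol j D) D
         then tH H * hinv (TH H j) * P (scol j D)
         else TH H j * P (scol j D) + (1 - tH H) * P D))"
proof -
  interpret hecke_rank_one "tH H" "TH H j" "XH H j" "XH H (Suc j)"
    using j by (rule hecke_rank_one)
  have central: "(1 - tH H) * (Xcol H D * P D) = Xcol H D * ((1 - tH H) * P D)" for D
  proof -
    have "tH H * (Xcol H D * P D) = Xcol H D * (tH H * P D)"
      by (simp add: t_central[of "Xcol H D"] flip: mult.assoc)
    then show ?thesis by (simp add: left_diff_distrib right_diff_distrib)
  qed
  have "tH H * hinv (TH H j) * (\<Sum>C\<in>cols n l. Xcol H C * P C)
      = TH H j * (\<Sum>C\<in>cols n l. Xcol H C * P C) + (1 - tH H) * (\<Sum>C\<in>cols n l. Xcol H C * P C)"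
    by (simp add: t_hinv_T distrib_right left_diff_distrib)
  also have "(1 - tH H) * (\<Sum>C\<in>cols n l. Xcol H C * P C)
      = (\<Sum>D\<in>cols n l. Xcol H D * ((1 - tH H) * P D))"
    by (simp add: sum_distrib_left central)
  finally have "tH H * hinv (TH H j) * (\<Sum>C\<in>cols n l. Xcol H C * P C)
      = (\<Sum>D\<in>cols n l. Xcol H D *
          ((if col_le (scol j D) D
            then tH H * hinv (TH H j) * P (scol j D) - (1 - tH H) * P D
            else TH H j * P (scol j D)) + (1 - tH H) * P D))"
    by (simp add: T_mult_Xcol_sum[OF j] distrib_left sum.distrib)
  moreover have "(if c then x - y else z) + y = (if c then x else z + y)" for c and x y z :: 'h
    by simp
  ultimately show ?thesis
    by simp
qed

end

theorem lemma6p4: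
  fixes H :: "'h::ring_1 ahecke" and n l j :: nat and K :: "nat set list"
  assumes "is_affine_hecke n H"
    and "is_tableau n K"
    and "l \<in> {1..n}" and "card (hd K) \<le> l"
    and "j \<in> {1..<n}"
  shows "tH H * hinv (TH H j) * (\<Sum>C\<in>cols n l. Xcol H C * Psi H n (C # K))
           = (\<Sum>D\<in>cols n l. Xcol H D * fDK H n j D K) \<and>
         TH H j * (\<Sum>C\<in>cols n l. Xcol H C * Psi H n (C # K))
           = (\<Sum>D\<in>cols n l. Xcol H D * gDK H n j D K)"
proof -
  interpret affine_hecke n H by (rule affine_hecke.intro) fact
  show ?thesis
    unfolding fDK_def gDK_def
    by (intro conjI t_hinv_T_mult_Xcol_sum[OF assms(5), where P = "\<lambda>C. Psi H n (C # K)"]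
        T_mult_Xcol_sum[OF assms(5), where P = "\<lambda>C. Psi H n (C # K)"])
qed

end
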